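(* The Banach space $c_0$ (real or complex) has the $\mathbf{L}_{p,p}$-nu.
   Context: For a Banach space $X$: $\Pi(X)=\{(x,x^* )\in S_X\times S_{X^*}: x^*(x)=1\}$; for $T\in\mathcal{L}(X)$ (bounded linear operators on $X$), $v(T)=\sup\{|x^*(Tx)|:(x,x^* )\in\Pi(X)\}$. $X$ has the $\mathbf{L}_{p,p}$-nu if for every $\varepsilon>0$ and $(x,x^* )\in\Pi(X)$ there is $\eta(\varepsilon,(x,x^* ))>0$ such that whenever $T\in\mathcal{L}(X)$ with $v(T)=1$ satisfies $|x^*(Tx)|>1-\eta(\varepsilon,(x,x^* ))$, there is $S\in\mathcal{L}(X)$ with $v(S)=1$, $|x^*(Sx)|=1$ and $\|S-T\|<\varepsilon$. *)

theory Defs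
  imports "HOL-Analysis.Analysis"
begin

text \<open>Operators and functionals are 'a-linear (hence complex-linear in the complex case)
  and bounded on c_0; their values outside c_0 are irrelevant.\<close>

definition c0 :: "(nat \<Rightarrow> 'a::real_normed_field) set" where
  "c0 = {x. x \<longlonglongrightarrow> 0}"

definition c0_norm :: "(nat \<Rightarrow> 'a::real_normed_field) \<Rightarrow> real" where
  "c0_norm x = (SUP n. norm (x n))"

definition c0_ball :: "(nat \<Rightarrow> 'a::real_normed_field) set" where
  "c0_ball = {x \<in> c0. c0_norm x \<le> 1}"

definition c0_op :: "((nat \<Rightarrow> 'a::real_normed_field) \<Rightarrow> (nat \<Rightarrow> 'a)) \<Rightarrow> bool" where
  "c0_op T \<longleftrightarrow>
     (\<forall>x\<in>c0. T x \<in> c0) \<and>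
     (\<forall>x\<in>c0. \<forall>y\<in>c0. T (\<lambda>n. x n + y n) = (\<lambda>n. T x n + T y n)) \<and>
     (\<forall>c. \<forall>x\<in>c0. T (\<lambda>n. c * x n) = (\<lambda>n. c * T x n)) \<and>
     (\<exists>C. \<forall>x\<in>c0. c0_norm (T x) \<le> C * c0_norm x)"

definition c0_op_norm :: "((nat \<Rightarrow> 'a::real_normed_field) \<Rightarrow> (nat \<Rightarrow> 'a)) \<Rightarrow> real" where
  "c0_op_norm T = (SUP x\<in>c0_ball. c0_norm (T x))"

definition c0_functional :: "((nat \<Rightarrow> 'a::real_normed_field) \<Rightarrow> 'a) \<Rightarrow> bool" where
  "c0_functional f \<longleftrightarrow>
     (\<forall>x\<in>c0. \<forall>y\<in>c0. f (\<lambda>n. x n + y n) = f x + f y) \<and>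
     (\<forall>c. \<forall>x\<in>c0. f (\<lambda>n. c * x n) = c * f x) \<and>
     (\<exists>C. \<forall>x\<in>c0. norm (f x) \<le> C * c0_norm x)"

definition c0_dual_norm :: "((nat \<Rightarrow> 'a::real_normed_field) \<Rightarrow> 'a) \<Rightarrow> real" where
  "c0_dual_norm f = (SUP x\<in>c0_ball. norm (f x))"

definition c0_Pi :: "((nat \<Rightarrow> 'a::real_normed_field) \<times> ((nat \<Rightarrow> 'a) \<Rightarrow> 'a)) set" where
  "c0_Pi = {(x, f). x \<in> c0 \<and> c0_norm x = 1 \<and> c0_functional f \<and> c0_dual_norm f = 1 \<and> f x = 1}"

definition c0_numrad :: "((nat \<Rightarrow> 'a::real_normed_field) \<Rightarrow> (nat \<Rightarrow> 'a)) \<Rightarrow> real" where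
  "c0_numrad T = (SUP p\<in>(c0_Pi :: ((nat \<Rightarrow> 'a) \<times> ((nat \<Rightarrow> 'a) \<Rightarrow> 'a)) set).
                     norm (snd p (T (fst p))))"

definition c0_Lpp_nu :: "'a::real_normed_field itself \<Rightarrow> bool" where
  "c0_Lpp_nu _ \<longleftrightarrow>
    (\<forall>\<epsilon>>0. \<forall>(x, f) \<in> (c0_Pi :: ((nat \<Rightarrow> 'a) \<times> ((nat \<Rightarrow> 'a) \<Rightarrow> 'a)) set).
      \<exists>\<eta>>0. \<forall>T :: (nat \<Rightarrow> 'a) \<Rightarrow> (nat \<Rightarrow> 'a).
        c0_op T \<and> c0_numrad T = 1 \<and> norm (f (T x)) > 1 - \<eta> \<longrightarrow>
        (\<exists>S :: (nat \<Rightarrow> 'a) \<Rightarrow> (nat \<Rightarrow> 'a).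
           c0_op S \<and> c0_numrad S = 1 \<and> norm (f (S x)) = 1 \<and>
           c0_op_norm (\<lambda>y n. S y n - T y n) < \<epsilon>))"

end

theory Submission
  imports Defs
begin

text \<open>
  Let (x, x*) \<in> \<Pi>(c_0). Only finitely many coordinates of x have modulus 1 (the peak set A),
  the others stay below some \<gamma> < 1, and x* is supported on A with coefficients aligned with x.
  For an operator T with v(T) = 1 every row functional y \<mapsto> (Ty)_k is a contraction. If
  |x*(Tx)| is close to 1, then (Tx)_k is close to \<mu> x_k on the support of x*, \<mu> being the phase
  of x*(Tx). A contraction that nearly maps x to a unimodular scalar c is, up to a small error,
  a functional y \<mapsto> c \<Sum>_{j\<in>A} w_j y_j / x_j with w a probability vector on A. Replacing those
  finitely many rows of T by such exact functionals yields a contraction S with x*(Sx) = \<mu>,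
  hence v(S) = 1, and with ||S - T|| small.
\<close>

section \<open>The sequence space c_0\<close>

lemma bdd_above_norm_c0: "x \<in> c0 \<Longrightarrow> bdd_above (range (\<lambda>n. norm (x n)))"
proof -
  assume "x \<in> c0"
  then have "Bseq x"
    unfolding c0_def using convergent_imp_Bseq convergentI by blast
  then obtain K where "\<forall>n. norm (x n) \<le> K"
    unfolding Bseq_def by auto
  then show ?thesis by (auto intro: bdd_aboveI2)
qed

lemma norm_le_c0_norm: "x \<in> c0 \<Longrightarrow> norm (x n) \<le> c0_norm x"
  unfolding c0_norm_def by (rule cSUP_upper) (auto simp: bdd_above_norm_c0)

lemma c0_norm_le: "(\<And>n. norm (x n) \<le> M) \<Longrightarrow> c0_norm x \<le> M"
  unfolding c0_norm_def by (rule cSUP_least) auto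

lemma c0_norm_nonneg: "x \<in> c0 \<Longrightarrow> 0 \<le> c0_norm x"
  using norm_le_c0_norm[of x 0] norm_ge_zero order_trans by blast

lemma c0_norm_eq_0D: "x \<in> c0 \<Longrightarrow> c0_norm x = 0 \<Longrightarrow> x = (\<lambda>n. 0)"
  using norm_le_c0_norm[of x] by fastforce

lemma c0_ball_iff_norm_le_1: "x \<in> c0_ball \<longleftrightarrow> x \<in> c0 \<and> (\<forall>n. norm (x n) \<le> 1)"
proof
  assume "x \<in> c0_ball"
  then show "x \<in> c0 \<and> (\<forall>n. norm (x n) \<le> 1)"
    unfolding c0_ball_def by (auto intro: order_trans[OF norm_le_c0_norm])
qed (auto simp: c0_ball_def intro: c0_norm_le)

lemma zero_in_c0 [simp]: "(\<lambda>n. 0) \<in> c0"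
  unfolding c0_def by simp

lemma c0_norm_zero [simp]: "c0_norm (\<lambda>n. 0::'a::real_normed_field) = 0"
  unfolding c0_norm_def by simp

lemma c0_ball_nonempty: "c0_ball \<noteq> {}"
  using c0_ball_iff_norm_le_1[of "\<lambda>n. 0"] by auto

lemma c0_add: "x \<in> c0 \<Longrightarrow> y \<in> c0 \<Longrightarrow> (\<lambda>n. x n + y n) \<in> c0"
  unfolding c0_def using tendsto_add by fastforce

lemma c0_mult: "x \<in> c0 \<Longrightarrow> (\<lambda>n. c * x n) \<in> c0"
  unfolding c0_def using tendsto_mult_right_zero by blast

lemma c0_modify_finite:
  assumes "x \<in> c0" "finite B" "\<And>n. n \<notin> B \<Longrightarrow> y n = x n"
  shows "y \<in> c0"
proof -
  obtain N where "B \<subseteq> {..<N}"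
    using assms(2) finite_nat_bounded by blast
  then have "\<forall>n\<ge>N. x n = y n"
    using assms(3) by (metis lessThan_iff not_le subsetD)
  then have "\<forall>\<^sub>F n in sequentially. x n = y n"
    by (auto simp: eventually_sequentially)
  then show ?thesis
    using assms(1) Lim_transform_eventually unfolding c0_def by blast
qed

lemma c0_finite_support: "finite B \<Longrightarrow> (\<And>n. n \<notin> B \<Longrightarrow> y n = 0) \<Longrightarrow> y \<in> c0"
  using c0_modify_finite[OF zero_in_c0] .

lemma c0_sum: "finite B \<Longrightarrow> (\<And>j. j \<in> B \<Longrightarrow> v j \<in> c0) \<Longrightarrow> (\<lambda>n. \<Sum>j\<in>B. v j n) \<in> c0"
  by (induction B rule: finite_induct) (auto intro: c0_add)

lemma finite_c0_large_entries: "x \<in> c0 \<Longrightarrow> 0 < e \<Longrightarrow> finite {j. e \<le> norm (x j)}"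
proof -
  assume "x \<in> c0" "0 < e"
  then obtain N where "\<forall>n\<ge>N. norm (x n) < e"
    unfolding c0_def LIMSEQ_iff by auto
  then have "{j. e \<le> norm (x j)} \<subseteq> {..<N}"
    by (auto simp: not_le[symmetric])
  then show ?thesis using finite_subset by blast
qed

lemma c0_norm_mult:
  assumes "x \<in> c0"
  shows "c0_norm (\<lambda>n. c * x n) = norm c * c0_norm x"
proof (cases "c = 0")
  case False
  have "c0_norm x \<le> c0_norm (\<lambda>n. c * x n) / norm c"
    using norm_le_c0_norm[OF c0_mult[OF assms]] False
    by (intro c0_norm_le) (simp add: norm_mult field_simps)
  moreover have "c0_norm (\<lambda>n. c * x n) \<le> norm c * c0_norm x"
    by (rule c0_norm_le) (simp add: norm_mult assms norm_le_c0_norm mult_left_mono)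
  ultimately show ?thesis
    using False by (simp add: field_simps)
qed simp

definition c0_unit :: "nat \<Rightarrow> nat \<Rightarrow> 'a::real_normed_field" where
  "c0_unit k = (\<lambda>n. if n = k then 1 else 0)"

lemma c0_unit_in_c0 [simp]: "c0_unit k \<in> c0"
  by (rule c0_finite_support[of "{k}"]) (auto simp: c0_unit_def)

lemma c0_unit_in_c0_ball [simp]: "c0_unit k \<in> c0_ball"
  by (simp add: c0_ball_iff_norm_le_1) (simp add: c0_unit_def)

definition c0_restrict :: "nat set \<Rightarrow> (nat \<Rightarrow> 'a::real_normed_field) \<Rightarrow> nat \<Rightarrow> 'a" where
  "c0_restrict B y = (\<lambda>n. if n \<in> B then y n else 0)"

lemma c0_restrict_eq_sum_units:
  "finite B \<Longrightarrow> c0_restrict B y = (\<lambda>n. \<Sum>j\<in>B. y j * c0_unit j n)"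
  by (auto simp: c0_restrict_def c0_unit_def fun_eq_iff if_distrib sum.delta cong: if_cong)

lemma norm_le_c0_norm_if_bounded_on_ball:
  fixes h :: "(nat \<Rightarrow> 'a::real_normed_field) \<Rightarrow> 'a"
  assumes hom: "\<And>c y. y \<in> c0 \<Longrightarrow> h (\<lambda>n. c * y n) = c * h y"
    and bound: "\<And>y. y \<in> c0_ball \<Longrightarrow> norm (h y) \<le> B" and u: "u \<in> c0"
  shows "norm (h u) \<le> B * c0_norm u"
proof (cases "c0_norm u = 0")
  case True
  then show ?thesis
    using c0_norm_eq_0D[OF u] hom[of "\<lambda>n. 0" 0] by simp
next
  case False
  define s where "s = c0_norm u"
  have s: "s > 0"
    using False c0_norm_nonneg[OF u] s_def by simp
  define y where "y = (\<lambda>n. of_real (1/s) * u n)"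
  have "y \<in> c0_ball"
    using c0_mult[OF u, of "of_real (1/s)"] c0_norm_mult[OF u, of "of_real (1/s)"] s
    unfolding c0_ball_def y_def s_def by (simp add: norm_divide)
  moreover have "u = (\<lambda>n. of_real s * y n)"
    using s by (auto simp: y_def)
  then have "h u = of_real s * h y"
    using hom \<open>y \<in> c0_ball\<close> unfolding c0_ball_def by auto
  ultimately show ?thesis
    using bound s by (simp add: norm_mult s_def mult.commute)
qed

section \<open>Contractive functionals, \<Pi>(c_0) and the numerical radius\<close>

definition c0_contraction :: "((nat \<Rightarrow> 'a::real_normed_field) \<Rightarrow> 'a) \<Rightarrow> bool" where
  "c0_contraction g \<longleftrightarrow>
     (\<forall>x\<in>c0. \<forall>y\<in>c0. g (\<lambda>n. x n + y n) = g x + g y) \<and>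
     (\<forall>c. \<forall>x\<in>c0. g (\<lambda>n. c * x n) = c * g x) \<and>
     (\<forall>x\<in>c0. norm (g x) \<le> c0_norm x)"

lemma c0_contraction_add:
  "c0_contraction g \<Longrightarrow> x \<in> c0 \<Longrightarrow> y \<in> c0 \<Longrightarrow> g (\<lambda>n. x n + y n) = g x + g y"
  unfolding c0_contraction_def by blast

lemma c0_contraction_mult: "c0_contraction g \<Longrightarrow> x \<in> c0 \<Longrightarrow> g (\<lambda>n. c * x n) = c * g x"
  unfolding c0_contraction_def by blast

lemma c0_contraction_norm_le: "c0_contraction g \<Longrightarrow> x \<in> c0 \<Longrightarrow> norm (g x) \<le> c0_norm x"
  unfolding c0_contraction_def by blast

lemma c0_contraction_zero: "c0_contraction g \<Longrightarrow> g (\<lambda>n. 0) = 0"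
  using c0_contraction_mult[of g "\<lambda>n. 0" 0] by simp

lemma c0_contraction_sum:
  assumes g: "c0_contraction g"
  shows "finite B \<Longrightarrow> (\<And>j. j \<in> B \<Longrightarrow> v j \<in> c0) \<Longrightarrow>
    g (\<lambda>n. \<Sum>j\<in>B. v j n) = (\<Sum>j\<in>B. g (v j))"
proof (induction B rule: finite_induct)
  case (insert a F)
  then have "g (\<lambda>n. v a n + (\<Sum>j\<in>F. v j n)) = g (v a) + g (\<lambda>n. \<Sum>j\<in>F. v j n)"
    by (intro c0_contraction_add[OF g]) (auto intro: c0_sum)
  with insert show ?case
    by simp
qed (simp add: c0_contraction_zero[OF g])

lemma c0_contraction_restrict:
  assumes g: "c0_contraction g" and B: "finite B"
  shows "g (c0_restrict B y) = (\<Sum>j\<in>B. y j * g (c0_unit j))"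
  unfolding c0_restrict_eq_sum_units[OF B]
  by (simp add: c0_contraction_sum[OF g B] c0_mult c0_contraction_mult[OF g])

lemma c0_contraction_sum_norm_units_le:
  assumes g: "c0_contraction g" and B: "finite B"
  shows "(\<Sum>j\<in>B. norm (g (c0_unit j))) \<le> 1"
proof -
  \<comment> \<open>test g on the finitely supported unimodular vector aligning all the terms\<close>
  define w where "w j = (if g (c0_unit j) = 0 then 1 else of_real (norm (g (c0_unit j))) / g (c0_unit j))" for j
  define v where "v = c0_restrict B w"
  have "v \<in> c0"
    unfolding v_def by (rule c0_finite_support[OF B]) (simp add: c0_restrict_def)
  moreover have "c0_norm v \<le> 1"
    by (rule c0_norm_le) (simp add: v_def c0_restrict_def w_def norm_divide)
  moreover have "g v = of_real (\<Sum>j\<in>B. norm (g (c0_unit j)))"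
    unfolding v_def c0_contraction_restrict[OF g B] of_real_sum by (rule sum.cong) (auto simp: w_def)
  ultimately show ?thesis
    using c0_contraction_norm_le[OF g, of v] by (simp del: of_real_sum add: sum_nonneg)
qed

lemma norm_le_c0_dual_norm:
  fixes g :: "(nat \<Rightarrow> 'a::real_normed_field) \<Rightarrow> 'a"
  assumes g: "c0_functional g" and u: "u \<in> c0"
  shows "norm (g u) \<le> c0_dual_norm g * c0_norm u"
proof (rule norm_le_c0_norm_if_bounded_on_ball[where h = g, OF _ _ u])
  show "\<And>c x. x \<in> c0 \<Longrightarrow> g (\<lambda>n. c * x n) = c * g x"
    using g unfolding c0_functional_def by blast
  obtain C where C: "\<forall>x\<in>c0. norm (g x) \<le> C * c0_norm x"
    using g unfolding c0_functional_def by blast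
  have "norm (g x) \<le> \<bar>C\<bar>" if "x \<in> c0_ball" for x
  proof -
    have "x \<in> c0" "c0_norm x \<le> 1" "0 \<le> c0_norm x"
      using that c0_norm_nonneg unfolding c0_ball_def by auto
    have "norm (g x) \<le> C * c0_norm x"
      using C \<open>x \<in> c0\<close> by blast
    also have "\<dots> \<le> \<bar>C\<bar> * c0_norm x"
      using \<open>0 \<le> c0_norm x\<close> by (simp add: mult_right_mono)
    also have "\<dots> \<le> \<bar>C\<bar>"
      using \<open>c0_norm x \<le> 1\<close> \<open>0 \<le> c0_norm x\<close> by (simp add: mult_left_le)
    finally show ?thesis .
  qed
  then show "\<And>y. y \<in> c0_ball \<Longrightarrow> norm (g y) \<le> c0_dual_norm g"
    unfolding c0_dual_norm_def by (intro cSUP_upper bdd_aboveI2) auto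
qed

lemma c0_contraction_if_dual_norm_1:
  "c0_functional g \<Longrightarrow> c0_dual_norm g = 1 \<Longrightarrow> c0_contraction g"
  using norm_le_c0_dual_norm[of g] unfolding c0_contraction_def c0_functional_def by auto

lemma c0_PiD:
  "(z, g) \<in> c0_Pi \<Longrightarrow> z \<in> c0 \<and> c0_norm z = 1 \<and> c0_functional g \<and> c0_dual_norm g = 1 \<and> g z = 1"
  unfolding c0_Pi_def by blast

lemma c0_Pi_coordinate:
  assumes z: "z \<in> c0_ball" and k: "norm (z k) = 1"
  shows "(z, \<lambda>v. v k / z k) \<in> c0_Pi"
proof -
  define g where "g = (\<lambda>v::nat \<Rightarrow> 'a. v k / z k)"
  have z0: "z k \<noteq> 0"
    using k by auto
  have zc: "z \<in> c0" and "c0_norm z \<le> 1"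
    using z by (auto simp: c0_ball_def)
  moreover have "1 \<le> c0_norm z"
    using norm_le_c0_norm[OF zc, of k] k by simp
  ultimately have zn: "c0_norm z = 1"
    by simp
  have gb: "norm (g v) \<le> c0_norm v" if "v \<in> c0" for v
    using norm_le_c0_norm[OF that, of k] k by (simp add: g_def norm_divide)
  have gf: "c0_functional g"
    unfolding c0_functional_def
    by (auto simp: g_def add_divide_distrib intro!: exI[of _ 1] gb[unfolded g_def])
  have gb1: "norm (g v) \<le> 1" if "v \<in> c0_ball" for v
    using that gb[of v] unfolding c0_ball_def by simp
  have "c0_dual_norm g \<le> 1"
    unfolding c0_dual_norm_def using gb1 c0_ball_nonempty by (intro cSUP_least) auto
  moreover have "norm (g (c0_unit k)) \<le> c0_dual_norm g"
    unfolding c0_dual_norm_def using gb1 by (intro cSUP_upper bdd_aboveI2) auto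
  ultimately have "c0_dual_norm g = 1"
    using k by (simp add: g_def c0_unit_def norm_divide)
  then show ?thesis
    unfolding c0_Pi_def using zc zn gf z0 by (simp add: g_def)
qed

lemma exists_unimodular_norm_add_eq:
  fixes u v :: "'a::real_normed_field"
  shows "\<exists>\<omega>. norm \<omega> = 1 \<and> norm (u + \<omega> * v) = norm u + norm v"
proof (cases "u = 0 \<or> v = 0")
  case False
  define \<omega> where "\<omega> = (u / of_real (norm u)) * (of_real (norm v) / v)"
  have "u + \<omega> * v = u * of_real (1 + norm v / norm u)"
    using False by (simp add: \<omega>_def field_simps)
  also have "norm \<dots> = norm u * (1 + norm v / norm u)"
    unfolding norm_mult norm_of_real by simp
  finally have "norm (u + \<omega> * v) = norm u + norm v"
    using False by (simp add: field_simps)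
  moreover have "norm \<omega> = 1"
    using False by (simp add: \<omega>_def norm_mult norm_divide)
  ultimately show ?thesis
    by blast
qed (auto intro!: exI[of _ 1])

lemma c0_op_in_c0: "c0_op T \<Longrightarrow> x \<in> c0 \<Longrightarrow> T x \<in> c0"
  unfolding c0_op_def by blast

lemma c0_op_add: "c0_op T \<Longrightarrow> x \<in> c0 \<Longrightarrow> y \<in> c0 \<Longrightarrow> T (\<lambda>n. x n + y n) = (\<lambda>n. T x n + T y n)"
  unfolding c0_op_def by blast

lemma c0_op_mult: "c0_op T \<Longrightarrow> x \<in> c0 \<Longrightarrow> T (\<lambda>n. c * x n) = (\<lambda>n. c * T x n)"
  unfolding c0_op_def by blast

lemma norm_le_c0_numrad:
  fixes T :: "(nat \<Rightarrow> 'a::real_normed_field) \<Rightarrow> (nat \<Rightarrow> 'a)"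
  assumes T: "c0_op T" and zg: "(z, g) \<in> c0_Pi"
  shows "norm (g (T z)) \<le> c0_numrad T"
proof -
  obtain C where C: "\<forall>x\<in>c0. c0_norm (T x) \<le> C * c0_norm x"
    using T unfolding c0_op_def by blast
  have "norm (g' (T z')) \<le> C" if "(z', g') \<in> c0_Pi" for z' g'
  proof -
    have z': "z' \<in> c0" "c0_norm z' = 1" and g': "c0_functional g'" "c0_dual_norm g' = 1"
      using c0_PiD[OF that] by auto
    have "norm (g' (T z')) \<le> c0_norm (T z')"
      using norm_le_c0_dual_norm[OF g'(1) c0_op_in_c0[OF T z'(1)]] g'(2) by simp
    also have "\<dots> \<le> C"
      using C z' by force
    finally show ?thesis .
  qed
  then have "bdd_above ((\<lambda>p. norm (snd p (T (fst p)))) ` (c0_Pi :: ((nat \<Rightarrow> 'a) \<times> _) set))"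
    by (intro bdd_aboveI2) auto
  from cSUP_upper[OF zg this] show ?thesis
    unfolding c0_numrad_def by simp
qed

lemma row_norm_le_c0_numrad:
  fixes T :: "(nat \<Rightarrow> 'a::real_normed_field) \<Rightarrow> (nat \<Rightarrow> 'a)"
  assumes T: "c0_op T" and y: "y \<in> c0_ball"
  shows "norm (T y k) \<le> c0_numrad T"
proof -
  \<comment> \<open>put a suitable unimodular \<omega> at entry k of y: together with the coordinate functional at k
      this is a point (z, g) of \<Pi> with |g (T z)| = |t| + |u| \<ge> |T y k|\<close>
  have yc: "y \<in> c0" and yk: "\<And>n. norm (y n) \<le> 1"
    using y by (auto simp: c0_ball_iff_norm_le_1)
  define t where "t = T (c0_unit k) k"
  define u where "u = T y k - y k * t"
  obtain \<omega>' :: 'a where \<omega>': "norm \<omega>' = 1" "norm (t + \<omega>' * u) = norm t + norm u"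
    using exists_unimodular_norm_add_eq by blast
  define \<omega> where "\<omega> = inverse \<omega>'"
  have \<omega>: "\<omega> \<noteq> 0" "norm \<omega> = 1"
    using \<omega>' by (auto simp: \<omega>_def norm_inverse)
  define z where "z = (\<lambda>n. y n + (\<omega> - y k) * c0_unit k n)"
  have "z \<in> c0"
    unfolding z_def by (intro c0_add c0_mult yc c0_unit_in_c0)
  then have "z \<in> c0_ball"
    using yk \<omega> by (auto simp: c0_ball_iff_norm_le_1 z_def c0_unit_def)
  moreover have "z k = \<omega>"
    by (simp add: z_def c0_unit_def)
  ultimately have Pi: "(z, \<lambda>v. v k / \<omega>) \<in> c0_Pi"
    using c0_Pi_coordinate[of z k] \<omega> by simp
  have "T z = (\<lambda>n. T y n + (\<omega> - y k) * T (c0_unit k) n)"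
    unfolding z_def by (simp add: c0_op_add[OF T yc] c0_op_mult[OF T] c0_mult)
  then have "T z k / \<omega> = t + \<omega>' * u"
    using \<omega> by (simp add: t_def u_def \<omega>_def field_simps)
  have "norm (T y k) \<le> norm u + norm (y k) * norm t"
    by (metis u_def diff_add_cancel norm_mult norm_triangle_ineq)
  also have "\<dots> \<le> norm u + norm t"
    using yk[of k] by (simp add: mult_left_le_one_le)
  also have "\<dots> = norm (T z k / \<omega>)"
    using \<open>T z k / \<omega> = t + \<omega>' * u\<close> \<omega>' by simp
  also have "\<dots> \<le> c0_numrad T"
    using norm_le_c0_numrad[OF T Pi] by simp
  finally show ?thesis .
qed

lemma c0_contraction_row:
  assumes T: "c0_op T" and v: "c0_numrad T \<le> 1"
  shows "c0_contraction (\<lambda>y. T y k)"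
proof -
  have "norm (T y k) \<le> c0_norm y" if "y \<in> c0" for y
    using norm_le_c0_norm_if_bounded_on_ball[where h = "\<lambda>y. T y k" and B = 1, OF _ _ that]
      row_norm_le_c0_numrad[OF T, of _ k] v c0_op_mult[OF T] by force
  then show ?thesis
    unfolding c0_contraction_def using c0_op_add[OF T] c0_op_mult[OF T] by simp
qed

lemma c0_numrad_eq_1:
  fixes S :: "(nat \<Rightarrow> 'a::real_normed_field) \<Rightarrow> (nat \<Rightarrow> 'a)"
  assumes S: "c0_op S" and contr: "\<And>y. y \<in> c0 \<Longrightarrow> c0_norm (S y) \<le> c0_norm y"
    and xf: "(x, f) \<in> c0_Pi" and fSx: "norm (f (S x)) = 1"
  shows "c0_numrad S = 1"
proof (rule antisym)
  have "norm (g (S z)) \<le> 1" if "(z, g) \<in> c0_Pi" for z g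
  proof -
    have z: "z \<in> c0" "c0_norm z = 1" and g: "c0_functional g" "c0_dual_norm g = 1"
      using c0_PiD[OF that] by auto
    then show ?thesis
      using norm_le_c0_dual_norm[OF g(1) c0_op_in_c0[OF S z(1)]] contr[OF z(1)] by simp
  qed
  then show "c0_numrad S \<le> 1"
    unfolding c0_numrad_def using xf by (intro cSUP_least) auto
  show "1 \<le> c0_numrad S"
    using norm_le_c0_numrad[OF S xf] fSx by simp
qed

lemma c0_op_norm_le:
  assumes "\<And>y n. y \<in> c0_ball \<Longrightarrow> norm (T y n) \<le> E"
  shows "c0_op_norm T \<le> E"
  unfolding c0_op_norm_def using assms c0_ball_nonempty by (intro cSUP_least c0_norm_le) auto

lemma c0_contraction_replace_rows:
  assumes T: "c0_op T" and T_rows: "\<And>k. c0_contraction (\<lambda>y. T y k)"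
    and \<phi>: "\<And>k. k \<in> B \<Longrightarrow> c0_contraction (\<phi> k)" and B: "finite B"
  defines "S \<equiv> \<lambda>y n. if n \<in> B then \<phi> n y else T y n"
  shows "c0_op S" and "\<And>y. y \<in> c0 \<Longrightarrow> c0_norm (S y) \<le> c0_norm y"
proof -
  show contr: "c0_norm (S y) \<le> c0_norm y" if "y \<in> c0" for y
    using c0_contraction_norm_le[OF T_rows that] c0_contraction_norm_le[OF \<phi> that]
    by (intro c0_norm_le) (auto simp: S_def)
  have "S y \<in> c0" if "y \<in> c0" for y
    by (rule c0_modify_finite[OF c0_op_in_c0[OF T that] B]) (simp add: S_def)
  then show "c0_op S"
    unfolding c0_op_def using contr
    by (auto simp: S_def c0_contraction_add[OF \<phi>] c0_contraction_mult[OF \<phi>]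
        c0_op_add[OF T] c0_op_mult[OF T] intro!: exI[of _ 1])
qed

section \<open>Real parts\<close>

text \<open>On the scalar fields real and complex, inner 1 z is the real part of z; this lets one
  argument serve both cases.\<close>

lemma inner_one_one [simp]: "inner 1 (1::'a::{real_normed_algebra_1, real_inner}) = 1"
  using power2_norm_eq_inner[of "1::'a"] by simp

lemma inner_one_of_real [simp]: "inner 1 (of_real r :: 'a::{real_normed_algebra_1, real_inner}) = r"
  by (simp add: of_real_def)

lemma norm_of_real_minus_sq:
  fixes z :: "'a::{real_normed_algebra_1, real_inner}"
  shows "(norm (of_real a - z))\<^sup>2 = a\<^sup>2 - 2 * a * inner 1 z + (norm z)\<^sup>2"
proof -
  have "(norm (of_real a - z))\<^sup>2 = inner (a *\<^sub>R 1 - z) (a *\<^sub>R 1 - z)"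
    by (simp add: of_real_def power2_norm_eq_inner)
  also have "\<dots> = a\<^sup>2 - 2 * a * inner 1 z + (norm z)\<^sup>2"
    unfolding inner_diff_left inner_diff_right inner_scaleR_left inner_scaleR_right
    by (simp add: inner_commute[of z 1] dot_square_norm power2_eq_square algebra_simps)
  finally show ?thesis .
qed

lemma inner_one_le_norm:
  fixes z :: "'a::{real_normed_algebra_1, real_inner}"
  shows "inner 1 z \<le> norm z"
  using norm_cauchy_schwarz[of 1 z] by simp

lemma norm_of_real_minus_sq_le:
  fixes z :: "'a::{real_normed_algebra_1, real_inner}"
  assumes "norm z \<le> r"
  shows "(norm (of_real r - z))\<^sup>2 \<le> 2 * r * (r - inner 1 z)"
proof -
  have "(norm z)\<^sup>2 \<le> r\<^sup>2"
    using assms norm_ge_zero power_mono by blast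
  then show ?thesis
    unfolding norm_of_real_minus_sq by (simp add: power2_eq_square algebra_simps)
qed

lemma norm_of_real_minus_sq_le_sum_defect:
  fixes z :: "nat \<Rightarrow> 'a::{real_normed_algebra_1, real_inner}"
  assumes A: "finite A" and z: "\<And>j. j \<in> A \<Longrightarrow> norm (z j) \<le> r j" and k: "k \<in> A"
  shows "(norm (of_real (r k) - z k))\<^sup>2 \<le> 2 * r k * ((\<Sum>j\<in>A. r j) - inner 1 (\<Sum>j\<in>A. z j))"
proof -
  have defect: "0 \<le> r j - inner 1 (z j)" if "j \<in> A" for j
    using inner_one_le_norm[of "z j"] z[OF that] by simp
  have "r k - inner 1 (z k) \<le> (\<Sum>j\<in>A. r j - inner 1 (z j))"
    using defect by (intro member_le_sum[OF k _ A]) auto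
  also have "\<dots> = (\<Sum>j\<in>A. r j) - inner 1 (\<Sum>j\<in>A. z j)"
    by (simp add: sum_subtractf inner_sum_right)
  finally have "2 * r k * (r k - inner 1 (z k)) \<le> 2 * r k * ((\<Sum>j\<in>A. r j) - inner 1 (\<Sum>j\<in>A. z j))"
    using z[OF k] norm_ge_zero[of "z k"] by (intro mult_left_mono) linarith+
  with norm_of_real_minus_sq_le[OF z[OF k]] show ?thesis
    by linarith
qed

lemma norm_of_real_norm_minus_le:
  fixes z :: "nat \<Rightarrow> 'a::{real_normed_algebra_1, real_inner}"
  assumes A: "finite A" and z: "(\<Sum>j\<in>A. norm (z j)) \<le> 1"
    and D: "norm ((\<Sum>j\<in>A. z j) - 1) \<le> D" and j: "j \<in> A"
  shows "norm (of_real (norm (z j)) - z j) \<le> sqrt (2 * D)"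
proof (rule real_le_rsqrt)
  define defect where "defect = (\<Sum>j\<in>A. norm (z j)) - inner 1 (\<Sum>j\<in>A. z j)"
  have defect: "0 \<le> defect" "defect \<le> D"
    using z inner_one_le_norm[of "1 - (\<Sum>j\<in>A. z j)"] D
      inner_one_le_norm[of "\<Sum>j\<in>A. z j"] norm_sum[of z A]
    by (simp_all add: defect_def inner_diff_right norm_minus_commute)
  have "norm (z j) \<le> 1"
    using member_le_sum[of j A "\<lambda>j. norm (z j)"] j A z by simp
  then have "2 * norm (z j) * defect \<le> 2 * 1 * D"
    using defect by (intro mult_mono) auto
  then show "(norm (of_real (norm (z j)) - z j))\<^sup>2 \<le> 2 * D"
    using norm_of_real_minus_sq_le_sum_defect[OF A, of z "\<lambda>j. norm (z j)" j] j
    by (simp add: defect_def)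
qed

lemma exists_probability_vector_near:
  fixes z :: "nat \<Rightarrow> 'a::{real_normed_algebra_1, real_inner}"
  assumes A: "finite A" "A \<noteq> {}" and z: "(\<Sum>j\<in>A. norm (z j)) \<le> 1"
    and D: "norm ((\<Sum>j\<in>A. z j) - 1) \<le> D"
  shows "\<exists>w. (\<forall>j. 0 \<le> w j) \<and> (\<Sum>j\<in>A. w j) = 1 \<and>
    (\<Sum>j\<in>A. norm (of_real (w j) - z j)) \<le> real (card A) * sqrt (2 * D) + D"
proof -
  \<comment> \<open>w is the vector of moduli of z, topped up uniformly to total mass 1\<close>
  define m where "m = real (card A)"
  have m: "0 < m"
    using A by (simp add: m_def card_gt_0_iff)
  define r where "r = (1 - (\<Sum>j\<in>A. norm (z j))) / m"
  define w where "w j = norm (z j) + r" for j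
  have r: "0 \<le> r" "m * r \<le> D"
  proof -
    show "0 \<le> r"
      using z m by (simp add: r_def)
    have "1 - norm (\<Sum>j\<in>A. z j) \<le> D"
      using D norm_triangle_ineq2[of 1 "\<Sum>j\<in>A. z j"] by (simp add: norm_minus_commute)
    then show "m * r \<le> D"
      using m norm_sum[of z A] by (simp add: r_def)
  qed
  have "norm (of_real (w j) - z j) \<le> sqrt (2 * D) + r" if "j \<in> A" for j
  proof -
    have "of_real (w j) - z j = (of_real (norm (z j)) - z j) + of_real r"
      by (simp add: w_def)
    then have "norm (of_real (w j) - z j) \<le> norm (of_real (norm (z j)) - z j) + norm (of_real r :: 'a)"
      by (simp only: norm_triangle_ineq)
    then show ?thesis
      using norm_of_real_norm_minus_le[OF A(1) z D that] r by simp
  qed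
  then have "(\<Sum>j\<in>A. norm (of_real (w j) - z j)) \<le> m * (sqrt (2 * D) + r)"
    using sum_bounded_above[of A "\<lambda>j. norm (of_real (w j) - z j)"] by (simp add: m_def)
  moreover have "(\<Sum>j\<in>A. w j) = 1"
    using m by (simp add: w_def r_def sum.distrib m_def)
  ultimately show ?thesis
    using r by (intro exI[of _ w]) (auto simp: w_def distrib_left m_def)
qed

lemma exists_pos_sqrt_error_bound:
  fixes \<epsilon> m :: real
  assumes "0 < \<epsilon>"
  shows "\<exists>D>0. m * sqrt (2 * D) + 2 * D < \<epsilon>"
proof -
  have "((\<lambda>D. m * sqrt (2 * D) + 2 * D) \<longlongrightarrow> 0) (at_right 0)"
    by (auto intro!: tendsto_eq_intros)
  then have "\<forall>\<^sub>F D in at_right 0. m * sqrt (2 * D) + 2 * D < \<epsilon>"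
    using assms by (auto dest: order_tendstoD(2))
  then obtain b where "0 < b" "\<And>D. 0 < D \<Longrightarrow> D < b \<Longrightarrow> m * sqrt (2 * D) + 2 * D < \<epsilon>"
    unfolding eventually_at_right_field by blast
  then show ?thesis
    by (metis field_sum_of_halves half_gt_zero less_add_same_cancel1)
qed

section \<open>Peak sets\<close>

locale c0_peak_gap =
  fixes x :: "nat \<Rightarrow> 'a::real_normed_field" and A :: "nat set" and \<gamma> :: real
  assumes in_c0: "x \<in> c0"
    and norm_le_1: "\<And>n. norm (x n) \<le> 1"
    and peak_eq: "A = {j. norm (x j) = 1}"
    and finite_peak: "finite A"
    and gap: "0 < \<gamma>" "\<gamma> < 1"
    and off_peak_le: "\<And>j. j \<notin> A \<Longrightarrow> norm (x j) \<le> \<gamma>"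
begin

lemma norm_peak: "j \<in> A \<Longrightarrow> norm (x j) = 1"
  using peak_eq by simp

lemma peak_nonzero: "j \<in> A \<Longrightarrow> x j \<noteq> 0"
  using norm_peak by force

lemma restrict_peak_in_c0: "c0_restrict A y \<in> c0"
  by (rule c0_finite_support[OF finite_peak]) (auto simp: c0_restrict_def)

lemma restrict_off_peak_in_c0: "y \<in> c0 \<Longrightarrow> c0_restrict (-A) y \<in> c0"
  by (rule c0_modify_finite[OF _ finite_peak]) (auto simp: c0_restrict_def)

lemma contraction_split:
  assumes g: "c0_contraction g" and y: "y \<in> c0"
  shows "g y = g (c0_restrict A y) + g (c0_restrict (-A) y)"
proof -
  have "y = (\<lambda>n. c0_restrict A y n + c0_restrict (-A) y n)"
    by (auto simp: c0_restrict_def)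
  then show ?thesis
    by (metis c0_contraction_add[OF g restrict_peak_in_c0 restrict_off_peak_in_c0[OF y]])
qed

lemma norm_peak_part_add_norm_off_peak_le:
  assumes g: "c0_contraction g" and y: "y \<in> c0_ball"
  shows "norm (g (c0_restrict A x)) + norm (g (c0_restrict (-A) y)) \<le> 1"
proof -
  have yc: "y \<in> c0" and yn: "\<And>n. norm (y n) \<le> 1"
    using y by (auto simp: c0_ball_iff_norm_le_1)
  obtain \<omega> where \<omega>: "norm \<omega> = 1"
    "norm (g (c0_restrict A x) + \<omega> * g (c0_restrict (-A) y)) =
       norm (g (c0_restrict A x)) + norm (g (c0_restrict (-A) y))"
    using exists_unimodular_norm_add_eq by blast
  define z where "z = (\<lambda>n. c0_restrict A x n + \<omega> * c0_restrict (-A) y n)"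
  have zc: "z \<in> c0"
    unfolding z_def by (intro c0_add c0_mult restrict_peak_in_c0 restrict_off_peak_in_c0 yc)
  have "g z = g (c0_restrict A x) + \<omega> * g (c0_restrict (-A) y)"
    unfolding z_def
    by (simp add: c0_contraction_add[OF g] c0_contraction_mult[OF g] restrict_peak_in_c0
        restrict_off_peak_in_c0 yc c0_mult)
  moreover have "c0_norm z \<le> 1"
    by (rule c0_norm_le) (auto simp: z_def c0_restrict_def norm_le_1 yn norm_mult \<omega>)
  ultimately show ?thesis
    using c0_contraction_norm_le[OF g zc] \<omega>(2) by simp
qed

lemma norm_peak_part_add_norm_off_peak_ge:
  assumes g: "c0_contraction g" and c: "norm c = 1" and \<delta>: "norm (g x - c) \<le> \<delta>"
  shows "1 - \<delta> \<le> norm (g (c0_restrict A x)) + norm (g (c0_restrict (-A) x))"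
proof -
  have "1 - \<delta> \<le> norm (g x)"
    using \<delta> c norm_triangle_ineq2[of c "g x"] by (simp add: norm_minus_commute)
  also have "\<dots> \<le> norm (g (c0_restrict A x)) + norm (g (c0_restrict (-A) x))"
    unfolding contraction_split[OF g in_c0] by (rule norm_triangle_ineq)
  finally show ?thesis .
qed

lemma off_peak_defect_le:
  assumes g: "c0_contraction g" and c: "norm c = 1" and \<delta>: "norm (g x - c) \<le> \<delta>"
  shows "\<delta> + norm (g (c0_restrict (-A) x)) \<le> \<delta> / (1 - \<gamma>)"
proof -
  \<comment> \<open>testing against the off-peak part of x blown up by 1/\<gamma> into the unit ball\<close>
  define q where "q = norm (g (c0_restrict (-A) x))"
  define y where "y = (\<lambda>n. of_real (1/\<gamma>) * c0_restrict (-A) x n)"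
  have "y \<in> c0"
    unfolding y_def by (intro c0_mult restrict_off_peak_in_c0 in_c0)
  moreover have "norm (y n) \<le> 1" for n
    using off_peak_le[of n] gap by (auto simp: y_def c0_restrict_def norm_divide field_simps)
  ultimately have y: "y \<in> c0_ball"
    by (simp add: c0_ball_iff_norm_le_1)
  have "c0_restrict (-A) y = y"
    by (auto simp: y_def c0_restrict_def)
  then have "norm (g (c0_restrict (-A) y)) = q / \<gamma>"
    using c0_contraction_mult[OF g restrict_off_peak_in_c0[OF in_c0], of "of_real (1/\<gamma>)"] gap
    by (simp add: y_def q_def norm_divide)
  then have "norm (g (c0_restrict A x)) + q / \<gamma> \<le> 1"
    using norm_peak_part_add_norm_off_peak_le[OF g y] by simp
  moreover have "1 - \<delta> \<le> norm (g (c0_restrict A x)) + q"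
    using norm_peak_part_add_norm_off_peak_ge[OF g c \<delta>] by (simp add: q_def)
  ultimately have "q / \<gamma> - q \<le> \<delta>"
    by linarith
  then have "q * (1 - \<gamma>) \<le> \<delta> * \<gamma>"
    using gap by (simp add: field_simps)
  then show ?thesis
    using gap by (simp add: q_def field_simps)
qed

lemma norm_off_peak_le:
  assumes g: "c0_contraction g" and c: "norm c = 1" and \<delta>: "norm (g x - c) \<le> \<delta>"
    and y: "y \<in> c0_ball"
  shows "norm (g (c0_restrict (-A) y)) \<le> \<delta> / (1 - \<gamma>)"
  using norm_peak_part_add_norm_off_peak_ge[OF g c \<delta>] norm_peak_part_add_norm_off_peak_le[OF g y]
    off_peak_defect_le[OF g c \<delta>] by linarith

lemma norm_peak_part_minus_le:
  assumes g: "c0_contraction g" and c: "norm c = 1" and \<delta>: "norm (g x - c) \<le> \<delta>"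
  shows "norm (g (c0_restrict A x) - c) \<le> \<delta> / (1 - \<gamma>)"
proof -
  have "g (c0_restrict A x) - c = (g x - c) - g (c0_restrict (-A) x)"
    using contraction_split[OF g in_c0] by simp
  also have "norm \<dots> \<le> \<delta> + norm (g (c0_restrict (-A) x))"
    using \<delta> by (intro order_trans[OF norm_triangle_ineq4]) simp
  finally have "norm (g (c0_restrict A x) - c) \<le> \<delta> + norm (g (c0_restrict (-A) x))" .
  then show ?thesis
    using off_peak_defect_le[OF g c \<delta>] by linarith
qed

lemma contraction_eq_sum_peak:
  assumes g: "c0_contraction g" and gx: "g x = 1" and u: "u \<in> c0"
  shows "g u = (\<Sum>j\<in>A. u j * g (c0_unit j))"
proof -
  have "norm (g (c0_restrict (-A) y)) \<le> 0" if "y \<in> c0_ball" for y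
    using norm_off_peak_le[OF g _ _ that, of 1 0] gx by simp
  moreover have "g (c0_restrict (-A) (\<lambda>n. d * v n)) = d * g (c0_restrict (-A) v)"
    if "v \<in> c0" for d v
  proof -
    have "c0_restrict (-A) (\<lambda>n. d * v n) = (\<lambda>n. d * c0_restrict (-A) v n)"
      by (auto simp: c0_restrict_def)
    then show ?thesis
      using c0_contraction_mult[OF g restrict_off_peak_in_c0[OF that]] by simp
  qed
  ultimately have "norm (g (c0_restrict (-A) u)) \<le> 0 * c0_norm u"
    by (intro norm_le_c0_norm_if_bounded_on_ball[OF _ _ u]) auto
  then show ?thesis
    using contraction_split[OF g u] c0_contraction_restrict[OF g finite_peak] by simp
qed

definition peak_functional :: "'a \<Rightarrow> (nat \<Rightarrow> real) \<Rightarrow> (nat \<Rightarrow> 'a) \<Rightarrow> 'a" where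
  "peak_functional c w y = c * (\<Sum>j\<in>A. of_real (w j) * y j / x j)"

lemma peak_functional_at_peak:
  assumes "(\<Sum>j\<in>A. w j) = 1"
  shows "peak_functional c w x = c"
proof -
  have "peak_functional c w x = c * (\<Sum>j\<in>A. of_real (w j))"
    unfolding peak_functional_def using peak_nonzero by (intro arg_cong2[where f = "(*)"] sum.cong) auto
  then show ?thesis
    using assms by (metis mult.right_neutral of_real_1 of_real_sum)
qed

lemma c0_contraction_peak_functional:
  assumes c: "norm c = 1" and w: "\<And>j. 0 \<le> w j" "(\<Sum>j\<in>A. w j) = 1"
  shows "c0_contraction (peak_functional c w)"
proof -
  have "norm (peak_functional c w y) \<le> c0_norm y" if y: "y \<in> c0" for y
  proof -
    have "norm (peak_functional c w y) \<le> (\<Sum>j\<in>A. norm (of_real (w j) * y j / x j))"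
      unfolding peak_functional_def using c by (simp add: norm_mult norm_sum)
    also have "\<dots> \<le> (\<Sum>j\<in>A. w j * c0_norm y)"
      using norm_peak w(1) norm_le_c0_norm[OF y]
      by (intro sum_mono) (simp add: norm_mult norm_divide mult_left_mono)
    also have "\<dots> = c0_norm y"
      using w(2) by (simp add: sum_distrib_right[symmetric])
    finally show ?thesis .
  qed
  then show ?thesis
    unfolding c0_contraction_def peak_functional_def
    by (simp add: add_divide_distrib distrib_left sum.distrib sum_distrib_left mult.left_commute)
qed

lemma norm_peak_functional_minus_le:
  assumes g: "c0_contraction g" and c: "norm c = 1" and \<delta>: "norm (g x - c) \<le> \<delta>"
    and y: "y \<in> c0_ball"
  shows "norm (peak_functional c w y - g y)
    \<le> (\<Sum>j\<in>A. norm (of_real (w j) - g (c0_unit j) * x j / c)) + \<delta> / (1 - \<gamma>)"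
proof -
  have yc: "y \<in> c0" and yn: "\<And>n. norm (y n) \<le> 1"
    using y by (auto simp: c0_ball_iff_norm_le_1)
  have "peak_functional c w y - g (c0_restrict A y)
      = (\<Sum>j\<in>A. (c / x j) * (of_real (w j) - g (c0_unit j) * x j / c) * y j)"
    unfolding peak_functional_def c0_contraction_restrict[OF g finite_peak] sum_distrib_left
      sum_subtractf[symmetric]
    using peak_nonzero c by (intro sum.cong) (auto simp: field_simps)
  also have "norm \<dots> \<le> (\<Sum>j\<in>A. norm (of_real (w j) - g (c0_unit j) * x j / c))"
    using norm_peak c yn
    by (intro order_trans[OF norm_sum] sum_mono)
      (simp add: norm_mult norm_divide mult_right_le_one_le)
  finally have peak_part: "norm (peak_functional c w y - g (c0_restrict A y))
      \<le> (\<Sum>j\<in>A. norm (of_real (w j) - g (c0_unit j) * x j / c))" .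
  have "peak_functional c w y - g y
      = (peak_functional c w y - g (c0_restrict A y)) - g (c0_restrict (-A) y)"
    using contraction_split[OF g yc] by simp
  then have "norm (peak_functional c w y - g y)
      \<le> norm (peak_functional c w y - g (c0_restrict A y)) + norm (g (c0_restrict (-A) y))"
    by (simp only: norm_triangle_ineq4)
  with peak_part show ?thesis
    using norm_off_peak_le[OF g c \<delta> y] by linarith
qed

end

lemma c0_peak_gap_exists:
  assumes x: "x \<in> c0" "\<And>n. norm (x n) \<le> 1"
  shows "\<exists>\<gamma>. c0_peak_gap x {j. norm (x j) = 1} \<gamma>"
proof -
  \<comment> \<open>only finitely many entries have modulus at least 1/2, so the largest modulus below 1 is < 1\<close>
  define F where "F = {j. 1/2 \<le> norm (x j) \<and> norm (x j) \<noteq> 1}"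
  have "finite {j. 1/2 \<le> norm (x j)}"
    using finite_c0_large_entries[OF x(1), of "1/2"] by simp
  then have fin: "finite F" "finite {j. norm (x j) = 1}"
    by (auto simp: F_def elim: finite_subset[rotated])
  define \<gamma> where "\<gamma> = Max (insert (1/2) ((\<lambda>j. norm (x j)) ` F))"
  have "1/2 \<le> \<gamma>"
    unfolding \<gamma>_def using fin by (intro Max_ge) auto
  moreover have "\<gamma> < 1"
    unfolding \<gamma>_def using fin x(2) by (subst Max_less_iff) (auto simp: F_def less_le)
  moreover have "norm (x j) \<le> \<gamma>" if "norm (x j) \<noteq> 1" for j
  proof (cases "j \<in> F")
    case True
    then show ?thesis
      unfolding \<gamma>_def using fin by (intro Max_ge) auto
  qed (use that \<open>1/2 \<le> \<gamma>\<close> in \<open>auto simp: F_def\<close>)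
  ultimately have "c0_peak_gap x {j. norm (x j) = 1} \<gamma>"
    using x fin by unfold_locales auto
  then show ?thesis ..
qed

locale c0_peak_gap_inner = c0_peak_gap x A \<gamma>
  for x :: "nat \<Rightarrow> 'a::{real_normed_field, real_inner}" and A \<gamma>
begin

lemma exists_peak_functional_near:
  assumes g: "c0_contraction g" and c: "norm c = 1" and \<delta>: "norm (g x - c) \<le> \<delta>"
    and A: "A \<noteq> {}"
  shows "\<exists>w. (\<forall>j. 0 \<le> w j) \<and> (\<Sum>j\<in>A. w j) = 1 \<and>
    (\<forall>y\<in>c0_ball. norm (peak_functional c w y - g y)
       \<le> real (card A) * sqrt (2 * (\<delta> / (1 - \<gamma>))) + 2 * (\<delta> / (1 - \<gamma>)))"
proof -
  define z where "z j = g (c0_unit j) * x j / c" for j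
  have "(\<Sum>j\<in>A. norm (z j)) \<le> 1"
    using c0_contraction_sum_norm_units_le[OF g finite_peak] norm_peak c
    by (simp add: z_def norm_mult norm_divide)
  moreover have "(\<Sum>j\<in>A. z j) = g (c0_restrict A x) / c"
    by (simp add: z_def c0_contraction_restrict[OF g finite_peak] sum_divide_distrib mult.commute)
  then have "(\<Sum>j\<in>A. z j) - 1 = (g (c0_restrict A x) - c) / c"
    using c by (auto simp: diff_divide_distrib)
  then have "norm ((\<Sum>j\<in>A. z j) - 1) \<le> \<delta> / (1 - \<gamma>)"
    using norm_peak_part_minus_le[OF g c \<delta>] c by (simp add: norm_divide)
  ultimately obtain w where w: "\<forall>j. 0 \<le> w j" "(\<Sum>j\<in>A. w j) = 1"
    "(\<Sum>j\<in>A. norm (of_real (w j) - z j)) \<le> real (card A) * sqrt (2 * (\<delta> / (1 - \<gamma>))) + \<delta> / (1 - \<gamma>)"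
    using exists_probability_vector_near[OF finite_peak A] by blast
  moreover have "norm (peak_functional c w y - g y)
      \<le> real (card A) * sqrt (2 * (\<delta> / (1 - \<gamma>))) + 2 * (\<delta> / (1 - \<gamma>))" if "y \<in> c0_ball" for y
    using norm_peak_functional_minus_le[OF g c \<delta> that, of w] w(3) by (simp add: z_def)
  ultimately show ?thesis
    by blast
qed

lemma peak_coefficient_aligned:
  assumes g: "c0_contraction g" and gx: "g x = 1" and j: "j \<in> A"
  shows "x j * g (c0_unit j) = of_real (norm (g (c0_unit j)))"
proof -
  have "(\<Sum>j\<in>A. x j * g (c0_unit j)) = 1"
    using contraction_eq_sum_peak[OF g gx in_c0] gx by simp
  then have "(norm (of_real (norm (g (c0_unit j))) - x j * g (c0_unit j)))\<^sup>2
      \<le> 2 * norm (g (c0_unit j)) * ((\<Sum>j\<in>A. norm (g (c0_unit j))) - 1)"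
    using norm_of_real_minus_sq_le_sum_defect[OF finite_peak, of "\<lambda>j. x j * g (c0_unit j)"
        "\<lambda>j. norm (g (c0_unit j))" j] j norm_peak
    by (simp add: norm_mult)
  also have "\<dots> \<le> 0"
    using c0_contraction_sum_norm_units_le[OF g finite_peak]
    by (intro mult_nonneg_nonpos) auto
  finally show ?thesis
    by simp
qed

lemma coordinate_near_peak:
  assumes f: "c0_contraction f" and fx: "f x = 1" and u: "u \<in> c0_ball"
    and \<mu>: "norm \<mu> = 1" "f u = \<mu> * of_real (norm (f u))" and k: "k \<in> A"
  shows "norm (f (c0_unit k)) * (norm (u k - \<mu> * x k))\<^sup>2 \<le> 2 * (1 - norm (f u))"
proof -
  define a where "a j = f (c0_unit j)" for j
  have uc: "u \<in> c0" and un: "\<And>n. norm (u n) \<le> 1"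
    using u by (auto simp: c0_ball_iff_norm_le_1)
  have \<mu>0: "\<mu> \<noteq> 0"
    using \<mu> by auto
  have "(\<Sum>j\<in>A. u j * a j / \<mu>) = f u / \<mu>"
    by (simp add: contraction_eq_sum_peak[OF f fx uc] a_def sum_divide_distrib)
  also have "\<dots> = of_real (norm (f u))"
    using \<mu>(2) \<mu>0 by (metis nonzero_mult_div_cancel_left)
  finally have sum_z: "inner 1 (\<Sum>j\<in>A. u j * a j / \<mu>) = norm (f u)"
    by simp
  have "(norm (of_real (norm (a k)) - u k * a k / \<mu>))\<^sup>2
      \<le> 2 * norm (a k) * ((\<Sum>j\<in>A. norm (a j)) - norm (f u))"
    using norm_of_real_minus_sq_le_sum_defect[OF finite_peak, of "\<lambda>j. u j * a j / \<mu>"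
        "\<lambda>j. norm (a j)" k] k un \<mu>
    by (simp add: sum_z norm_mult norm_divide mult_left_le_one_le)
  also have "\<dots> \<le> 2 * norm (a k) * (1 - norm (f u))"
    using c0_contraction_sum_norm_units_le[OF f finite_peak] by (simp add: a_def mult_left_mono)
  finally have key: "(norm (of_real (norm (a k)) - u k * a k / \<mu>))\<^sup>2 \<le> 2 * norm (a k) * (1 - norm (f u))" .
  have "of_real (norm (a k)) - u k * a k / \<mu> = (a k / \<mu>) * (\<mu> * x k - u k)"
    using peak_coefficient_aligned[OF f fx k] \<mu>0 by (simp add: a_def field_simps)
  then have "norm (of_real (norm (a k)) - u k * a k / \<mu>) = norm (a k) * norm (u k - \<mu> * x k)"
    using \<mu> by (simp add: norm_mult norm_divide norm_minus_commute)
  with key have "norm (a k) * (norm (a k) * (norm (u k - \<mu> * x k))\<^sup>2)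
      \<le> norm (a k) * (2 * (1 - norm (f u)))"
    by (simp add: power_mult_distrib power2_eq_square algebra_simps)
  moreover have "norm (f u) \<le> 1"
    using c0_contraction_norm_le[OF f uc] u by (simp add: c0_ball_def)
  ultimately show ?thesis
    by (cases "a k = 0") (auto simp: a_def)
qed

lemma exists_contraction_near:
  assumes f: "c0_contraction f" and fx: "f x = 1" and T: "c0_op T" and vT: "c0_numrad T \<le> 1"
    and \<mu>: "norm \<mu> = 1"
    and near: "\<And>k. k \<in> A \<Longrightarrow> f (c0_unit k) \<noteq> 0 \<Longrightarrow> norm (T x k - \<mu> * x k) \<le> \<delta>"
  shows "\<exists>S. c0_op S \<and> (\<forall>y\<in>c0. c0_norm (S y) \<le> c0_norm y) \<and> f (S x) = \<mu> \<and>
    c0_op_norm (\<lambda>y n. S y n - T y n) \<le> real (card A) * sqrt (2 * (\<delta> / (1 - \<gamma>))) + 2 * (\<delta> / (1 - \<gamma>))"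
proof -
  \<comment> \<open>only the rows seen by f are replaced, each by a peak functional close to it\<close>
  define E where "E = real (card A) * sqrt (2 * (\<delta> / (1 - \<gamma>))) + 2 * (\<delta> / (1 - \<gamma>))"
  define B where "B = {k \<in> A. f (c0_unit k) \<noteq> 0}"
  have "B \<noteq> {}"
    using contraction_eq_sum_peak[OF f fx in_c0] fx sum.neutral[of A] by (force simp: B_def)
  then obtain k0 where "k0 \<in> B"
    by blast
  then have "A \<noteq> {}" and "0 \<le> \<delta>"
    using near[of k0] by (auto simp: B_def intro: order_trans[OF norm_ge_zero])
  then have "0 \<le> E"
    using gap by (simp add: E_def)
  have "\<exists>w. (\<forall>j. 0 \<le> w j) \<and> (\<Sum>j\<in>A. w j) = 1 \<and>
      (\<forall>y\<in>c0_ball. norm (peak_functional (\<mu> * x k) w y - T y k) \<le> E)" if "k \<in> B" for k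
    using exists_peak_functional_near[OF c0_contraction_row[OF T vT], of "\<mu> * x k" k \<delta>]
      near that norm_peak \<mu> \<open>A \<noteq> {}\<close> by (simp add: B_def E_def norm_mult)
  then obtain W where W: "\<And>k j. k \<in> B \<Longrightarrow> 0 \<le> W k j" "\<And>k. k \<in> B \<Longrightarrow> (\<Sum>j\<in>A. W k j) = 1"
    "\<And>k y. k \<in> B \<Longrightarrow> y \<in> c0_ball \<Longrightarrow> norm (peak_functional (\<mu> * x k) (W k) y - T y k) \<le> E"
    by metis
  define S where "S = (\<lambda>y n. if n \<in> B then peak_functional (\<mu> * x n) (W n) y else T y n)"
  have rows: "c0_contraction (peak_functional (\<mu> * x k) (W k))" if "k \<in> B" for k
    using c0_contraction_peak_functional W(1,2) \<mu> norm_peak that by (simp add: B_def norm_mult)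
  have "finite B"
    using finite_peak by (simp add: B_def)
  from c0_contraction_replace_rows[OF T c0_contraction_row[OF T vT], of B
      "\<lambda>k. peak_functional (\<mu> * x k) (W k)", OF rows this]
  have S: "c0_op S" "\<And>y. y \<in> c0 \<Longrightarrow> c0_norm (S y) \<le> c0_norm y"
    unfolding S_def by blast+
  moreover have "f (S x) = \<mu>"
  proof -
    have "(\<Sum>k\<in>A. S x k * f (c0_unit k)) = (\<Sum>k\<in>A. \<mu> * (x k * f (c0_unit k)))"
      using peak_functional_at_peak[OF W(2)] by (intro sum.cong) (auto simp: S_def B_def)
    then have "f (S x) = \<mu> * (\<Sum>k\<in>A. x k * f (c0_unit k))"
      by (simp add: contraction_eq_sum_peak[OF f fx c0_op_in_c0[OF S(1) in_c0]] sum_distrib_left)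
    then show ?thesis
      using contraction_eq_sum_peak[OF f fx in_c0] fx by simp
  qed
  moreover have "c0_op_norm (\<lambda>y n. S y n - T y n) \<le> E"
    using W(3) \<open>0 \<le> E\<close> by (intro c0_op_norm_le) (auto simp: S_def)
  ultimately show ?thesis
    using S(2) unfolding E_def by blast
qed

lemma exists_numrad_attaining_near:
  assumes xf: "(x, f) \<in> c0_Pi" and T: "c0_op T" "c0_numrad T = 1"
    and \<alpha>: "\<And>k. k \<in> A \<Longrightarrow> f (c0_unit k) \<noteq> 0 \<Longrightarrow> \<alpha> \<le> norm (f (c0_unit k))"
    and \<delta>: "0 < \<delta>" and \<eta>: "\<eta> \<le> 1/2" "\<eta> \<le> \<alpha> * \<delta>\<^sup>2 / 2"
    and fTx: "1 - \<eta> < norm (f (T x))"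
  shows "\<exists>S. c0_op S \<and> c0_numrad S = 1 \<and> norm (f (S x)) = 1 \<and>
    c0_op_norm (\<lambda>y n. S y n - T y n) \<le> real (card A) * sqrt (2 * (\<delta> / (1 - \<gamma>))) + 2 * (\<delta> / (1 - \<gamma>))"
proof -
  have f: "c0_contraction f" and fx: "f x = 1"
    using c0_PiD[OF xf] c0_contraction_if_dual_norm_1 by auto
  define \<mu> where "\<mu> = f (T x) / of_real (norm (f (T x)))"
  have "f (T x) \<noteq> 0"
    using fTx \<eta>(1) by auto
  then have \<mu>: "norm \<mu> = 1" "f (T x) = \<mu> * of_real (norm (f (T x)))"
    by (simp_all add: \<mu>_def norm_divide)
  have "norm (T x n) \<le> 1" for n
    using c0_contraction_norm_le[OF c0_contraction_row[OF T(1)] in_c0] c0_PiD[OF xf] T(2) by simp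
  then have Tx: "T x \<in> c0_ball"
    using c0_op_in_c0[OF T(1) in_c0] by (simp add: c0_ball_iff_norm_le_1)
  have near: "norm (T x k - \<mu> * x k) \<le> \<delta>" if k: "k \<in> A" "f (c0_unit k) \<noteq> 0" for k
  proof -
    have "norm (f (c0_unit k)) * (norm (T x k - \<mu> * x k))\<^sup>2 \<le> 2 * (1 - norm (f (T x)))"
      by (rule coordinate_near_peak[OF f fx Tx \<mu> k(1)])
    also have "\<dots> \<le> 2 * \<eta>"
      using fTx by simp
    also have "\<dots> \<le> \<alpha> * \<delta>\<^sup>2"
      using \<eta>(2) by linarith
    also have "\<dots> \<le> norm (f (c0_unit k)) * \<delta>\<^sup>2"
      by (rule mult_right_mono[OF \<alpha>[OF k]]) simp
    finally have "(norm (T x k - \<mu> * x k))\<^sup>2 \<le> \<delta>\<^sup>2"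
      by (rule mult_left_le_imp_le) (use k(2) in simp)
    then show ?thesis
      by (rule power2_le_imp_le) (use \<delta> in simp)
  qed
  have "c0_numrad T \<le> 1"
    using T(2) by simp
  from exists_contraction_near[OF f fx T(1) this \<mu>(1) near]
  obtain S where S: "c0_op S" "\<forall>y\<in>c0. c0_norm (S y) \<le> c0_norm y" "f (S x) = \<mu>"
    "c0_op_norm (\<lambda>y n. S y n - T y n) \<le> real (card A) * sqrt (2 * (\<delta> / (1 - \<gamma>))) + 2 * (\<delta> / (1 - \<gamma>))"
    by blast
  moreover have "c0_numrad S = 1"
    using S(2,3) \<mu>(1) by (intro c0_numrad_eq_1[OF S(1) _ xf]) auto
  ultimately show ?thesis
    using \<mu>(1) by auto
qed

end

lemma c0_Lpp_nu: "c0_Lpp_nu TYPE('a::{real_normed_field, real_inner})"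
  unfolding c0_Lpp_nu_def
proof (intro allI impI ballI, clarify)
  fix \<epsilon> :: real and x :: "nat \<Rightarrow> 'a" and f
  assume \<epsilon>: "0 < \<epsilon>" and xf: "(x, f) \<in> c0_Pi"
  have x: "x \<in> c0" "\<And>n. norm (x n) \<le> 1"
    using c0_PiD[OF xf] norm_le_c0_norm[of x] by auto
  define A where "A = {j. norm (x j) = 1}"
  obtain \<gamma> where "c0_peak_gap x A \<gamma>"
    using c0_peak_gap_exists[OF x] unfolding A_def ..
  then interpret c0_peak_gap_inner x A \<gamma>
    by (simp add: c0_peak_gap_inner_def)
  obtain D where D: "0 < D" "real (card A) * sqrt (2 * D) + 2 * D < \<epsilon>"
    using exists_pos_sqrt_error_bound[OF \<epsilon>] by blast
  define \<delta> where "\<delta> = D * (1 - \<gamma>)"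
  have \<delta>: "0 < \<delta>" "\<delta> / (1 - \<gamma>) = D"
    using D gap by (auto simp: \<delta>_def)
  define \<alpha> where "\<alpha> = Min (insert 1 ((\<lambda>k. norm (f (c0_unit k))) ` {k \<in> A. f (c0_unit k) \<noteq> 0}))"
  have \<alpha>: "0 < \<alpha>" "\<And>k. k \<in> A \<Longrightarrow> f (c0_unit k) \<noteq> 0 \<Longrightarrow> \<alpha> \<le> norm (f (c0_unit k))"
    using finite_peak by (auto simp: \<alpha>_def)
  define \<eta> where "\<eta> = min (1/2) (\<alpha> * \<delta>\<^sup>2 / 2)"
  have "0 < \<eta>"
    using \<alpha>(1) \<delta>(1) by (simp add: \<eta>_def)
  moreover have "\<exists>S. c0_op S \<and> c0_numrad S = 1 \<and> norm (f (S x)) = 1 \<and>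
      c0_op_norm (\<lambda>y n. S y n - T y n) < \<epsilon>"
    if "c0_op T" "c0_numrad T = 1" "1 - \<eta> < norm (f (T x))" for T
    using exists_numrad_attaining_near[OF xf that(1,2) \<alpha>(2) \<delta>(1) _ _ that(3)] D \<delta>(2)
    unfolding \<eta>_def by force
  ultimately show "\<exists>\<eta>>0. \<forall>T. c0_op T \<and> c0_numrad T = 1 \<and> 1 - \<eta> < norm (f (T x)) \<longrightarrow>
      (\<exists>S. c0_op S \<and> c0_numrad S = 1 \<and> norm (f (S x)) = 1 \<and> c0_op_norm (\<lambda>y n. S y n - T y n) < \<epsilon>)"
    by blast
qed

theorem theorem3p5:
  shows "c0_Lpp_nu TYPE(real) \<and> c0_Lpp_nu TYPE(complex)"
  using c0_Lpp_nu[where 'a = real] c0_Lpp_nu[where 'a = complex] by blast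

end
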